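(* Let $k\le l$ be positive integers with $\gcd(k,l)=1$, let $n\ge1$ and $m\ge0$ be integers, and write $m=qn+r$ with integers $q\ge 0$, $0\le r<n$. Then $$U^{k,l}(m,n)= \max\bigl(nkq,\ nkq+r(k+l)-nl\bigr).$$
   Context: $\mathcal D^{k,l}(m,n)$ denotes the set of all $nk\times nl$ matrices with nonnegative integer entries all of whose row sums equal $ml$ and all of whose column sums equal $mk$. For an $s\times t$ matrix $A=(a_{ij})$ with $s\le t$, a transversal of $A$ is a set of entries $T=\{a_{1i_1},\dots,a_{si_s}\}$ with $i_1,\dots,i_s\in\{1,\dots,t\}$ pairwise distinct, and $|T|=a_{1i_1}+\cdots+a_{si_s}$. Define ${\rm tropdet}(A)=\min_T|T|$ over all transversals $T$ of $A$, and $U^{k,l}(m,n)=\max_{A\in\mathcal D^{k,l}(m,n)}{\rm tropdet}(A)$. *)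

theory Defs
  imports Main
begin

(* An s x t matrix with nonnegative integer entries is a function
   A :: nat => nat => nat, entry (i,j) being A i j for i < s, j < t.
   Indices run from 0. *)

definition transversals :: "nat \<Rightarrow> nat \<Rightarrow> (nat \<Rightarrow> nat) set" where
  "transversals s t = {\<sigma>. \<sigma> ` {0..<s} \<subseteq> {0..<t} \<and> inj_on \<sigma> {0..<s}}"

definition tropdet :: "nat \<Rightarrow> nat \<Rightarrow> (nat \<Rightarrow> nat \<Rightarrow> nat) \<Rightarrow> nat" where
  "tropdet s t A = Min {(\<Sum>i<s. A i (\<sigma> i)) | \<sigma>. \<sigma> \<in> transversals s t}"

(* D^{k,l}(m,n): nk x nl nonnegative integer matrices, row sums ml, column sums mk.
   Entries outside the index range are normalised to 0 so each matrix has a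
   unique representative. *)
definition Dkl :: "nat \<Rightarrow> nat \<Rightarrow> nat \<Rightarrow> nat \<Rightarrow> (nat \<Rightarrow> nat \<Rightarrow> nat) set" where
  "Dkl k l m n = {A. (\<forall>i j. (i \<ge> n*k \<or> j \<ge> n*l) \<longrightarrow> A i j = 0)
      \<and> (\<forall>i<n*k. (\<Sum>j<n*l. A i j) = m*l)
      \<and> (\<forall>j<n*l. (\<Sum>i<n*k. A i j) = m*k)}"

definition Ukl :: "nat \<Rightarrow> nat \<Rightarrow> nat \<Rightarrow> nat \<Rightarrow> nat" where
  "Ukl k l m n = Max {tropdet (n*k) (n*l) A | A. A \<in> Dkl k l m n}"

end

theory Submission
  imports Defs
begin

text \<open>
  Upper bound: pad a matrix of \<open>Dkl k l m n\<close> with \<open>n(l - k)\<close> zero rows. By Egervary's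
  theorem, derived here from Hall's marriage theorem, its tropical determinant is at most
  \<open>\<Sum>u + \<Sum>v\<close> for a dual pair with \<open>u\<^sub>i + v\<^sub>j \<le> a\<^sub>i\<^sub>j\<close>. Put \<open>L = max u + max v\<close>, the first
  maximum over the genuine rows: a maximal row and a maximal column give
  \<open>\<Sum>u + \<Sum>v \<le> m(k + l) - nl L\<close>, and the padded rows give \<open>\<Sum>u + \<Sum>v \<le> nk L\<close>.
  The cases \<open>L \<le> q\<close> and \<open>L \<ge> q + 1\<close> yield the two terms of the maximum.

  Lower bound: adding \<open>q\<close> to every entry of an integral transportation plan with row sums \<open>rl\<close>
  and column sums \<open>rk\<close> gives tropical determinant at least \<open>nkq\<close>. If \<open>r(k + l) > nl\<close>, write
  \<open>n = 2c + d\<close>, \<open>r = c + d\<close> and use a plan supported on two diagonal blocks with all entries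
  positive there; a transversal leaves these blocks in at most \<open>ck + cl\<close> rows.
\<close>

section \<open>Hall's marriage theorem\<close>

definition hall_condition :: "'a set \<Rightarrow> ('a \<Rightarrow> 'b set) \<Rightarrow> bool" where
  "hall_condition I A \<longleftrightarrow> (\<forall>J\<subseteq>I. card J \<le> card (\<Union>(A ` J)))"

lemma hall_condition_subset: "hall_condition I A \<Longrightarrow> J \<subseteq> I \<Longrightarrow> hall_condition J A"
  unfolding hall_condition_def by blast

lemma hall_condition_remove_critical:
  assumes "finite I" "\<forall>i\<in>I. finite (A i)" "hall_condition I A"
    and "J \<subseteq> I" "card (\<Union>(A ` J)) \<le> card J"
  shows "hall_condition (I - J) (\<lambda>i. A i - \<Union>(A ` J))"
  unfolding hall_condition_def
proof (intro allI impI)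
  fix L assume L: "L \<subseteq> I - J"
  have fin: "finite L" "finite J" using L assms(1,4) finite_subset by blast+
  have "finite (\<Union>(A ` (L \<union> J)))" using fin L assms(2,4) by blast
  then have "card (\<Union>(A ` (L \<union> J)) - \<Union>(A ` J)) = card (\<Union>(A ` (L \<union> J))) - card (\<Union>(A ` J))"
    by (intro card_Diff_subset) (auto intro: finite_subset)
  moreover have "card (L \<union> J) \<le> card (\<Union>(A ` (L \<union> J)))"
    using L assms(4) by (intro assms(3)[unfolded hall_condition_def, rule_format]) blast
  moreover have "card (L \<union> J) = card L + card J"
    using L fin by (intro card_Un_disjoint) auto
  moreover have "(\<Union>i\<in>L. A i - \<Union>(A ` J)) = \<Union>(A ` (L \<union> J)) - \<Union>(A ` J)" by blast
  ultimately show "card L \<le> card (\<Union>i\<in>L. A i - \<Union>(A ` J))" using assms(5) by simp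
qed

lemma hall_condition_remove_surplus:
  assumes "\<forall>J\<subseteq>I. J \<noteq> {} \<longrightarrow> J \<noteq> I \<longrightarrow> card J < card (\<Union>(A ` J))" "i\<^sub>0 \<in> I"
  shows "hall_condition (I - {i\<^sub>0}) (\<lambda>i. A i - {x})"
  unfolding hall_condition_def
proof (intro allI impI)
  fix L assume L: "L \<subseteq> I - {i\<^sub>0}"
  show "card L \<le> card (\<Union>i\<in>L. A i - {x})"
  proof (cases "L = {}")
    case False
    then have "card L < card (\<Union>(A ` L))" using L assms(2) by (intro assms(1)[rule_format]) auto
    moreover have "(\<Union>i\<in>L. A i - {x}) = \<Union>(A ` L) - {x}" by blast
    ultimately show ?thesis by (simp add: card_Diff_singleton_if, arith)
  qed simp
qed

lemma inj_on_glue: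
  assumes "inj_on f J" "inj_on g K" "\<forall>i\<in>K. g i \<notin> f ` J"
  shows "inj_on (\<lambda>i. if i \<in> J then f i else g i) (J \<union> K)"
  using assms unfolding inj_on_def by (metis UnE image_eqI)

theorem hall_marriage:
  assumes "finite I" "\<forall>i\<in>I. finite (A i)" "hall_condition I A"
  shows "\<exists>f. inj_on f I \<and> (\<forall>i\<in>I. f i \<in> A i)"
  using assms
proof (induction "card I" arbitrary: I A rule: less_induct)
  case less
  have glue: "\<exists>f. inj_on f I \<and> (\<forall>i\<in>I. f i \<in> A i)"
    if J: "J \<subseteq> I" "J \<noteq> {}" and f\<^sub>J: "inj_on f\<^sub>J J" "\<forall>i\<in>J. f\<^sub>J i \<in> A i"
      and B: "hall_condition (I - J) B" "\<forall>i\<in>I - J. finite (B i) \<and> B i \<subseteq> A i - f\<^sub>J ` J"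
    for J f\<^sub>J B
  proof -
    have "card (I - J) < card I"
      using J less.prems(1) by (intro psubset_card_mono) auto
    then obtain g where g: "inj_on g (I - J)" "\<forall>i\<in>I - J. g i \<in> B i"
      using less.hyps[of "I - J" B] B less.prems(1) by blast
    have "inj_on (\<lambda>i. if i \<in> J then f\<^sub>J i else g i) (J \<union> (I - J))"
      using inj_on_glue[OF f\<^sub>J(1) g(1)] g(2) B(2) by blast
    moreover have "J \<union> (I - J) = I" using J by blast
    ultimately have "inj_on (\<lambda>i. if i \<in> J then f\<^sub>J i else g i) I" by simp
    moreover have "\<forall>i\<in>I. (if i \<in> J then f\<^sub>J i else g i) \<in> A i" using f\<^sub>J(2) g(2) B(2) by (simp, blast)
    ultimately show ?thesis by blast
  qed
  consider (empty) "I = {}"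
    | (critical) J where "J \<subseteq> I" "J \<noteq> {}" "J \<noteq> I" "card (\<Union>(A ` J)) \<le> card J"
    | (surplus) "I \<noteq> {}" "\<forall>J\<subseteq>I. J \<noteq> {} \<longrightarrow> J \<noteq> I \<longrightarrow> card J < card (\<Union>(A ` J))"
    using not_le by blast
  then show ?case
  proof cases
    case empty then show ?thesis by simp
  next
    case (critical J)
    have "card J < card I" using critical less.prems(1) by (meson psubsetI psubset_card_mono)
    moreover have "finite J" "\<forall>i\<in>J. finite (A i)" "hall_condition J A"
      using critical(1) less.prems hall_condition_subset by (auto intro: finite_subset)
    ultimately obtain f\<^sub>J where "inj_on f\<^sub>J J" "\<forall>i\<in>J. f\<^sub>J i \<in> A i"
      using less.hyps by blast
    then show ?thesis
      using glue[of J f\<^sub>J "\<lambda>i. A i - \<Union>(A ` J)"] critical less.prems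
        hall_condition_remove_critical[of I A J] by auto
  next
    case surplus
    then obtain i\<^sub>0 where i\<^sub>0: "i\<^sub>0 \<in> I" by blast
    have "card {i\<^sub>0} \<le> card (\<Union>(A ` {i\<^sub>0}))"
      using i\<^sub>0 by (intro less.prems(3)[unfolded hall_condition_def, rule_format]) simp
    then obtain x where "x \<in> A i\<^sub>0" by fastforce
    then show ?thesis
      using glue[of "{i\<^sub>0}" "\<lambda>_. x" "\<lambda>i. A i - {x}"] i\<^sub>0 less.prems
        hall_condition_remove_surplus[OF surplus(2) i\<^sub>0] by auto
  qed
qed

section \<open>Egervary's theorem\<close>

definition dual_certificate ::
    "nat \<Rightarrow> (nat \<Rightarrow> nat \<Rightarrow> int) \<Rightarrow> (nat \<Rightarrow> nat) \<Rightarrow> (nat \<Rightarrow> int) \<Rightarrow> (nat \<Rightarrow> int) \<Rightarrow> bool" where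
  "dual_certificate M a \<pi> u v \<longleftrightarrow>
     (\<forall>i<M. \<forall>j<M. u i + v j \<le> a i j) \<and> (\<Sum>i<M. a i (\<pi> i)) \<le> (\<Sum>i<M. u i) + (\<Sum>j<M. v j)"

lemma dual_certificate_shift:
  assumes "dual_certificate M a' \<pi> u v" "bij_betw \<pi> {..<M} {..<M}"
    and "\<And>i j. i < M \<Longrightarrow> j < M \<Longrightarrow> a' i j = a i j - s i + t j"
  shows "dual_certificate M a \<pi> (\<lambda>i. u i + s i) (\<lambda>j. v j - t j)"
proof -
  have \<pi>: "\<pi> i < M" if "i < M" for i using assms(2) that by (auto simp: bij_betw_def)
  have "(\<Sum>i<M. t (\<pi> i)) = (\<Sum>j<M. t j)"
    using sum.reindex_bij_betw[OF assms(2)] by simp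
  then have "(\<Sum>i<M. a i (\<pi> i)) = (\<Sum>i<M. a' i (\<pi> i)) + (\<Sum>i<M. s i) - (\<Sum>j<M. t j)"
    using assms(3) \<pi> by (simp add: sum.distrib sum_subtractf)
  moreover have "u i + s i + (v j - t j) \<le> a i j" if "i < M" "j < M" for i j
    using assms(1,3) that unfolding dual_certificate_def by force
  ultimately show ?thesis
    using assms(1) unfolding dual_certificate_def by (simp add: sum.distrib sum_subtractf)
qed

lemma zero_assignment_or_deficient_set:
  fixes a :: "nat \<Rightarrow> nat \<Rightarrow> nat"
  obtains \<pi> where "bij_betw \<pi> {..<M} {..<M}" "\<forall>i<M. a i (\<pi> i) = 0"
  | S where "S \<subseteq> {..<M}" "card {j. j < M \<and> (\<exists>i\<in>S. a i j = 0)} < card S"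
proof (cases "hall_condition {..<M} (\<lambda>i. {j. j < M \<and> a i j = 0})")
  case True
  have "\<forall>i\<in>{..<M}. finite {j. j < M \<and> a i j = 0}" by simp
  from hall_marriage[OF finite_lessThan this True]
  obtain \<pi> where \<pi>: "inj_on \<pi> {..<M}" "\<forall>i<M. \<pi> i < M \<and> a i (\<pi> i) = 0" by auto
  then have "\<pi> ` {..<M} = {..<M}" by (intro endo_inj_surj) auto
  then show ?thesis using that(1) \<pi> by (simp add: bij_betw_def)
next
  case False
  then obtain S where "S \<subseteq> {..<M}" "card (\<Union>i\<in>S. {j. j < M \<and> a i j = 0}) < card S"
    unfolding hall_condition_def by (auto simp: not_le)
  moreover have "(\<Union>i\<in>S. {j. j < M \<and> a i j = 0}) = {j. j < M \<and> (\<exists>i\<in>S. a i j = 0)}" by blast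
  ultimately show ?thesis using that(2) by simp
qed

lemma deficient_set_shift:
  fixes a :: "nat \<Rightarrow> nat \<Rightarrow> nat"
  assumes "S \<subseteq> {..<M}" and G: "G = {j. j < M \<and> (\<exists>i\<in>S. a i j = 0)}" and "card G < card S"
  obtains a' where "\<And>i j. i < M \<Longrightarrow> j < M \<Longrightarrow> int (a' i j) = int (a i j) - of_bool (i \<in> S) + of_bool (j \<in> G)"
    and "(\<Sum>i<M. \<Sum>j<M. a' i j) < (\<Sum>i<M. \<Sum>j<M. a i j)"
proof -
  define a' where "a' i j = nat (int (a i j) - of_bool (i \<in> S) + of_bool (j \<in> G))" for i j
  have a': "int (a' i j) = int (a i j) - of_bool (i \<in> S) + of_bool (j \<in> G)" if "i < M" "j < M" for i j
    using that G unfolding a'_def by (cases "a i j = 0") auto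
  have "S \<inter> {..<M} = S" "G \<inter> {..<M} = G" using assms(1) G by auto
  then have "(\<Sum>i<M. \<Sum>j<M. int (a' i j))
      = (\<Sum>i<M. \<Sum>j<M. int (a i j)) - int M * int (card S) + int M * int (card G)"
    using a' by (simp add: sum.distrib sum_subtractf Int_commute)
  moreover have "int M * int (card G) < int M * int (card S)"
    using assms(3) card_mono[OF finite_lessThan assms(1)] by (intro mult_strict_left_mono) auto
  ultimately have "(\<Sum>i<M. \<Sum>j<M. int (a' i j)) < (\<Sum>i<M. \<Sum>j<M. int (a i j))" by linarith
  then have "(\<Sum>i<M. \<Sum>j<M. a' i j) < (\<Sum>i<M. \<Sum>j<M. a i j)"
    by (simp flip: of_nat_sum)
  with a' show ?thesis by (rule that)
qed

theorem egervary:
  fixes a :: "nat \<Rightarrow> nat \<Rightarrow> nat"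
  shows "\<exists>\<pi> u v. bij_betw \<pi> {..<M} {..<M} \<and> dual_certificate M (\<lambda>i j. int (a i j)) \<pi> u v"
proof (induction "\<Sum>i<M. \<Sum>j<M. a i j" arbitrary: a rule: less_induct)
  case less
  show ?case
  proof (cases rule: zero_assignment_or_deficient_set[of M a])
    case (1 \<pi>)
    then have "dual_certificate M (\<lambda>i j. int (a i j)) \<pi> (\<lambda>_. 0) (\<lambda>_. 0)"
      unfolding dual_certificate_def by simp
    then show ?thesis using 1 by blast
  next
    case (2 S)
    define G where "G = {j. j < M \<and> (\<exists>i\<in>S. a i j = 0)}"
    obtain a' where a': "\<And>i j. i < M \<Longrightarrow> j < M \<Longrightarrow> int (a' i j) = int (a i j) - of_bool (i \<in> S) + of_bool (j \<in> G)"
      and "(\<Sum>i<M. \<Sum>j<M. a' i j) < (\<Sum>i<M. \<Sum>j<M. a i j)"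
      using deficient_set_shift[OF 2(1) G_def 2(2)[folded G_def]] by blast
    then obtain \<pi> u v where \<pi>: "bij_betw \<pi> {..<M} {..<M}"
      and cert: "dual_certificate M (\<lambda>i j. int (a' i j)) \<pi> u v"
      using less.hyps by blast
    have "dual_certificate M (\<lambda>i j. int (a i j)) \<pi> (\<lambda>i. u i + of_bool (i \<in> S)) (\<lambda>j. v j - of_bool (j \<in> G))"
      using a' by (intro dual_certificate_shift[OF cert \<pi>]) simp
    with \<pi> show ?thesis by blast
  qed
qed

section \<open>The upper bound\<close>

lemma transversal_less:
  "\<sigma> \<in> transversals s t \<Longrightarrow> i < s \<Longrightarrow> \<sigma> i < t"
  unfolding transversals_def by (auto simp: image_subset_iff)

lemma transversal_sums_finite:
  fixes A :: "nat \<Rightarrow> nat \<Rightarrow> nat"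
  shows "finite {(\<Sum>i<s. A i (\<sigma> i)) | \<sigma>. \<sigma> \<in> transversals s t}"
proof -
  have "(\<Sum>i<s. A i (\<sigma> i)) \<le> (\<Sum>i<s. \<Sum>j<t. A i j)" if "\<sigma> \<in> transversals s t" for \<sigma>
  proof (rule sum_mono)
    fix i assume "i \<in> {..<s}"
    with that have "\<sigma> i < t" by (simp add: transversal_less)
    then show "A i (\<sigma> i) \<le> (\<Sum>j<t. A i j)" by (intro member_le_sum) auto
  qed
  then have "{(\<Sum>i<s. A i (\<sigma> i)) | \<sigma>. \<sigma> \<in> transversals s t} \<subseteq> {..\<Sum>i<s. \<Sum>j<t. A i j}"
    by auto
  then show ?thesis by (rule finite_subset) simp
qed

lemma tropdet_le:
  "\<sigma> \<in> transversals s t \<Longrightarrow> tropdet s t A \<le> (\<Sum>i<s. A i (\<sigma> i))"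
  unfolding tropdet_def using transversal_sums_finite by (intro Min_le) auto

lemma tropdet_geI:
  assumes "s \<le> t" "\<And>\<sigma>. \<sigma> \<in> transversals s t \<Longrightarrow> c \<le> (\<Sum>i<s. A i (\<sigma> i))"
  shows "c \<le> tropdet s t A"
proof -
  have "id \<in> transversals s t" using assms(1) by (auto simp: transversals_def)
  then show ?thesis
    unfolding tropdet_def using assms(2) transversal_sums_finite by (subst Min_ge_iff) auto
qed

lemma tropdet_le_dual_value:
  fixes A :: "nat \<Rightarrow> nat \<Rightarrow> nat"
  assumes "N \<le> M"
  obtains u v :: "nat \<Rightarrow> int"
  where "\<And>i j. i < M \<Longrightarrow> j < M \<Longrightarrow> u i + v j \<le> (if i < N then int (A i j) else 0)"
    and "int (tropdet N M A) \<le> (\<Sum>i<M. u i) + (\<Sum>j<M. v j)"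
proof -
  define A' where "A' i j = (if i < N then A i j else 0)" for i j
  obtain \<pi> u v where \<pi>: "bij_betw \<pi> {..<M} {..<M}"
    and cert: "dual_certificate M (\<lambda>i j. int (A' i j)) \<pi> u v"
    using egervary by blast
  have "\<pi> \<in> transversals N M"
    using \<pi> assms inj_on_subset unfolding transversals_def bij_betw_def
    by (fastforce simp: lessThan_atLeast0)
  then have "tropdet N M A \<le> (\<Sum>i<N. A i (\<pi> i))" by (rule tropdet_le)
  also have "\<dots> = (\<Sum>i<M. A' i (\<pi> i))"
    unfolding A'_def using assms by (intro sum.mono_neutral_cong_left) auto
  finally have "int (tropdet N M A) \<le> (\<Sum>i<M. int (A' i (\<pi> i)))"
    by (simp flip: of_nat_sum)
  with cert show ?thesis
    by (intro that[of u v]) (auto simp: dual_certificate_def A'_def)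
qed

lemma dual_value_bound:
  fixes u v :: "nat \<Rightarrow> int" and A :: "nat \<Rightarrow> nat \<Rightarrow> nat"
  assumes "0 < N" "N \<le> M"
    and feasible: "\<And>i j. i < M \<Longrightarrow> j < M \<Longrightarrow> u i + v j \<le> (if i < N then int (A i j) else 0)"
    and rows: "\<And>i. i < N \<Longrightarrow> (\<Sum>j<M. A i j) = \<rho>"
    and cols: "\<And>j. j < M \<Longrightarrow> (\<Sum>i<N. A i j) = \<gamma>"
  obtains L where "(\<Sum>i<M. u i) + (\<Sum>j<M. v j) \<le> int N * L"
    and "(\<Sum>i<M. u i) + (\<Sum>j<M. v j) \<le> int \<rho> + int \<gamma> - int M * L"
proof -
  define X where "X = Max (u ` {..<N})"
  define W where "W = Max (v ` {..<M})"
  obtain i\<^sub>0 where i\<^sub>0: "i\<^sub>0 < N" "u i\<^sub>0 = X"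
    using Max_in[of "u ` {..<N}"] assms(1) unfolding X_def by fastforce
  obtain j\<^sub>0 where j\<^sub>0: "j\<^sub>0 < M" "v j\<^sub>0 = W"
    using Max_in[of "v ` {..<M}"] assms(1,2) unfolding W_def by (fastforce simp: lessThan_empty_iff)
  have X: "u i \<le> X" if "i < N" for i unfolding X_def using that by simp
  have W: "v j \<le> W" if "j < M" for j unfolding W_def using that by simp
  have "(\<Sum>j<M. X + v j) \<le> (\<Sum>j<M. int (A i\<^sub>0 j))"
    using feasible[of i\<^sub>0] i\<^sub>0 assms(2) by (intro sum_mono) fastforce
  then have row_bound: "int M * X + (\<Sum>j<M. v j) \<le> int \<rho>"
    using rows[OF i\<^sub>0(1)] by (simp add: sum.distrib flip: of_nat_sum)
  have "(\<Sum>i<M. u i + W) \<le> (\<Sum>i<M. if i < N then int (A i j\<^sub>0) else 0)"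
    using feasible[of _ j\<^sub>0] j\<^sub>0 by (intro sum_mono) simp
  also have "\<dots> = (\<Sum>i<N. int (A i j\<^sub>0))"
    using assms(2) by (intro sum.mono_neutral_cong_right) auto
  finally have col_bound: "(\<Sum>i<M. u i) + int M * W \<le> int \<gamma>"
    using cols[OF j\<^sub>0(1)] by (simp add: sum.distrib flip: of_nat_sum)
  have padded: "u i \<le> - W" if "N \<le> i" "i < M" for i
    using feasible[OF that(2) j\<^sub>0(1)] that j\<^sub>0 by simp
  have "(\<Sum>i<M. u i) = (\<Sum>i<N. u i) + (\<Sum>i\<in>{N..<M}. u i)"
    using assms(2) by (simp add: lessThan_atLeast0 sum.atLeastLessThan_concat)
  also have "\<dots> \<le> (\<Sum>i<N. X) + (\<Sum>i\<in>{N..<M}. - W)"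
    using X padded by (intro add_mono sum_mono) auto
  finally have "(\<Sum>i<M. u i) \<le> int N * X - int (M - N) * W" by simp
  moreover have "(\<Sum>j<M. v j) \<le> int M * W"
    using sum_mono[of "{..<M}" v "\<lambda>_. W"] W by simp
  ultimately have "(\<Sum>i<M. u i) + (\<Sum>j<M. v j) \<le> int N * (X + W)"
    using assms(2) by (simp add: of_nat_diff algebra_simps)
  moreover have "(\<Sum>i<M. u i) + (\<Sum>j<M. v j) \<le> int \<rho> + int \<gamma> - int M * (X + W)"
    using row_bound col_bound by (simp add: algebra_simps)
  ultimately show ?thesis by (rule that)
qed

lemma tropdet_Dkl_le:
  fixes k l m n q r :: nat
  assumes "0 < k" "k \<le> l" "1 \<le> n" "m = q * n + r" "A \<in> Dkl k l m n"
  shows "int (tropdet (n*k) (n*l) A)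
           \<le> max (int (n*k*q)) (int (n*k*q) + int r * (int k + int l) - int (n*l))"
proof -
  have NM: "0 < n*k" "n*k \<le> n*l" using assms(1-3) by auto
  obtain u v where feasible: "\<And>i j. i < n*l \<Longrightarrow> j < n*l \<Longrightarrow> u i + v j \<le> (if i < n*k then int (A i j) else 0)"
    and td: "int (tropdet (n*k) (n*l) A) \<le> (\<Sum>i<n*l. u i) + (\<Sum>j<n*l. v j)"
    using tropdet_le_dual_value[OF NM(2)] by blast
  have rows: "\<And>i. i < n*k \<Longrightarrow> (\<Sum>j<n*l. A i j) = m*l"
    and cols: "\<And>j. j < n*l \<Longrightarrow> (\<Sum>i<n*k. A i j) = m*k"
    using assms(5) unfolding Dkl_def by auto
  obtain L where V1: "(\<Sum>i<n*l. u i) + (\<Sum>j<n*l. v j) \<le> int (n*k) * L"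
    and V2: "(\<Sum>i<n*l. u i) + (\<Sum>j<n*l. v j) \<le> int (m*l) + int (m*k) - int (n*l) * L"
    using dual_value_bound[OF NM feasible rows cols] by blast
  show ?thesis
  proof (cases "L \<le> int q")
    case True
    then have "int (n*k) * L \<le> int (n*k) * int q" by (intro mult_left_mono) auto
    then show ?thesis using td V1 by simp
  next
    case False
    then have "int (n*l) * (int q + 1) \<le> int (n*l) * L" by (intro mult_left_mono) auto
    moreover have "int (m*l) + int (m*k) - int (n*l) * (int q + 1)
        = int (n*k*q) + int r * (int k + int l) - int (n*l)"
      using assms(4) by (simp add: algebra_simps)
    ultimately show ?thesis using td V2 by linarith
  qed
qed

section \<open>The lower bound\<close>

text \<open>
  For \<open>R a = C b\<close>, cutting \<open>{..<R a}\<close> into \<open>R\<close> intervals of length \<open>a\<close> and into \<open>C\<close>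
  intervals of length \<open>b\<close>, the overlaps form an \<open>R \<times> C\<close> matrix with row sums \<open>a\<close> and
  column sums \<open>b\<close> (the north-west corner rule).
\<close>

definition staircase :: "nat \<Rightarrow> nat \<Rightarrow> nat \<Rightarrow> nat \<Rightarrow> nat" where
  "staircase a b i j = card ({i*a..<(i+1)*a} \<inter> {j*b..<(j+1)*b})"

lemma staircase_swap: "staircase a b i j = staircase b a j i"
  unfolding staircase_def by (simp add: Int_commute)

lemma UN_blocks_lessThan: "(\<Union>j<C. {j*b..<(j+1)*b}) = {..<C*(b::nat)}"
proof (induction C)
  case (Suc C)
  have "(\<Union>j<Suc C. {j*b..<(j+1)*b}) = {C*b..<(C+1)*b} \<union> (\<Union>j<C. {j*b..<(j+1)*b})"
    by (simp add: lessThan_Suc)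
  then show ?case using Suc by auto
qed simp

lemma staircase_row_sum:
  assumes "R*a = C*b" "i < R"
  shows "(\<Sum>j<C. staircase a b i j) = a"
proof -
  define I where "I = {i*a..<(i+1)*a}"
  have "(I \<inter> {j*b..<(j+1)*b}) \<inter> (I \<inter> {j'*b..<(j'+1)*b}) = {}" if "j \<noteq> j'" for j j'
  proof -
    have "(j+1)*b \<le> j'*b \<or> (j'+1)*b \<le> j*b"
      using that by (metis Suc_eq_plus1 linorder_neqE_nat mult_le_mono1 Suc_leI)
    then show ?thesis by auto
  qed
  then have "(\<Sum>j<C. staircase a b i j) = card (\<Union>j<C. I \<inter> {j*b..<(j+1)*b})"
    unfolding staircase_def I_def by (simp add: card_UN_disjoint)
  also have "(\<Union>j<C. I \<inter> {j*b..<(j+1)*b}) = I"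
  proof -
    have "(i+1)*a \<le> C*b" using assms by (metis Suc_eq_plus1 Suc_leI mult_le_mono1)
    then show ?thesis unfolding Int_UN_distrib[symmetric] UN_blocks_lessThan I_def by auto
  qed
  finally show ?thesis unfolding I_def by simp
qed

lemma staircase_col_sum:
  assumes "R*a = C*b" "j < C"
  shows "(\<Sum>i<R. staircase a b i j) = b"
  using staircase_row_sum[of C b R a j] assms by (simp add: staircase_swap)

lemma sum_lessThan_if_less:
  fixes f g :: "nat \<Rightarrow> 'a::comm_monoid_add"
  assumes "c \<le> M"
  shows "(\<Sum>j<M. if j < c then f j else g j) = (\<Sum>j<c. f j) + (\<Sum>j\<in>{c..<M}. g j)"
proof -
  have "(\<Sum>j<M. if j < c then f j else g j)
      = (\<Sum>j\<in>{0..<c}. if j < c then f j else g j) + (\<Sum>j\<in>{c..<M}. if j < c then f j else g j)"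
    unfolding lessThan_atLeast0 using assms by (intro sum.atLeastLessThan_concat[symmetric]) simp_all
  also have "(\<Sum>j\<in>{c..<M}. if j < c then f j else g j) = (\<Sum>j\<in>{c..<M}. g j)"
    by (intro sum.cong) auto
  finally show ?thesis by (simp add: lessThan_atLeast0)
qed

lemma add_constant_in_Dkl:
  fixes E :: "nat \<Rightarrow> nat \<Rightarrow> nat"
  assumes "m = q * n + r"
    and rows: "\<And>i. i < n*k \<Longrightarrow> (\<Sum>j<n*l. E i j) = r*l"
    and cols: "\<And>j. j < n*l \<Longrightarrow> (\<Sum>i<n*k. E i j) = r*k"
  shows "(\<lambda>i j. if i < n*k \<and> j < n*l then q + E i j else 0) \<in> Dkl k l m n"
  unfolding Dkl_def
proof (intro CollectI conjI allI impI)
  fix i assume "i < n*k"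
  then show "(\<Sum>j<n*l. if i < n*k \<and> j < n*l then q + E i j else 0) = m*l"
    using rows assms(1) by (simp add: sum.distrib algebra_simps)
next
  fix j assume "j < n*l"
  then show "(\<Sum>i<n*k. if i < n*k \<and> j < n*l then q + E i j else 0) = m*k"
    using cols assms(1) by (simp add: sum.distrib algebra_simps)
qed auto

lemma card_crossing_le:
  assumes "inj_on \<sigma> {..<N}"
  shows "card {i. i < N \<and> (i < a \<and> b \<le> \<sigma> i \<or> a \<le> i \<and> \<sigma> i < b)} \<le> a + b"
proof -
  have "card {i. i < N \<and> \<sigma> i < b} \<le> card {..<b}"
    using assms by (intro card_inj_on_le[of \<sigma>]) (auto intro: inj_on_subset)
  then have "card ({..<a} \<union> {i. i < N \<and> \<sigma> i < b}) \<le> a + b"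
    using card_Un_le[of "{..<a}" "{i. i < N \<and> \<sigma> i < b}"] by simp
  moreover have "card {i. i < N \<and> (i < a \<and> b \<le> \<sigma> i \<or> a \<le> i \<and> \<sigma> i < b)}
      \<le> card ({..<a} \<union> {i. i < N \<and> \<sigma> i < b})"
    by (intro card_mono) auto
  ultimately show ?thesis by linarith
qed

lemma tropdet_staircase_ge:
  assumes "k \<le> l" "m = q * n + r"
  obtains A where "A \<in> Dkl k l m n" "n*k*q \<le> tropdet (n*k) (n*l) A"
proof -
  define A where "A i j = (if i < n*k \<and> j < n*l then q + staircase (r*l) (r*k) i j else 0)" for i j
  have blocks: "(n*k)*(r*l) = (n*l)*(r*k)" by simp
  have "A \<in> Dkl k l m n"
    unfolding A_def using assms(2)
    by (intro add_constant_in_Dkl) (auto simp: staircase_row_sum[OF blocks] staircase_col_sum[OF blocks])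
  moreover have "n*k*q \<le> tropdet (n*k) (n*l) A"
  proof (rule tropdet_geI)
    show "n*k \<le> n*l" using assms(1) by simp
  next
    fix \<sigma> assume "\<sigma> \<in> transversals (n*k) (n*l)"
    then have "q \<le> A i (\<sigma> i)" if "i < n*k" for i
      using that transversal_less by (simp add: A_def)
    then have "(\<Sum>i<n*k. q) \<le> (\<Sum>i<n*k. A i (\<sigma> i))" by (intro sum_mono) simp
    then show "n*k*q \<le> (\<Sum>i<n*k. A i (\<sigma> i))" by simp
  qed
  ultimately show ?thesis by (rule that)
qed

text \<open>
  With \<open>n = 2c + d\<close> and \<open>r = c + d\<close> this is an \<open>nk \<times> nl\<close> matrix with row sums \<open>rl\<close> and
  column sums \<open>rk\<close>, positive exactly on the blocks \<open>[0, ck) \<times> [0, cl)\<close> and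
  \<open>[ck, nk) \<times> [cl, nl)\<close>.
\<close>

definition two_block :: "nat \<Rightarrow> nat \<Rightarrow> nat \<Rightarrow> nat \<Rightarrow> nat \<Rightarrow> nat \<Rightarrow> nat" where
  "two_block k l c d i j =
     (if i < c*k \<and> j < c*l then 1 + staircase (d*l) (d*k) i j else of_bool (c*k \<le> i \<and> c*l \<le> j))"

lemma two_block_swap: "two_block k l c d i j = two_block l k c d j i"
  unfolding two_block_def by (auto simp: staircase_swap)

lemma two_block_row_sum:
  assumes "i < (2*c + d)*k"
  shows "(\<Sum>j<(2*c + d)*l. two_block k l c d i j) = (c + d)*l"
proof (cases "i < c*k")
  case True
  then have "(\<Sum>j<(2*c + d)*l. two_block k l c d i j)
      = (\<Sum>j<(2*c + d)*l. if j < c*l then 1 + staircase (d*l) (d*k) i j else 0)"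
    unfolding two_block_def by (intro sum.cong) auto
  also have "\<dots> = (\<Sum>j<c*l. 1 + staircase (d*l) (d*k) i j)"
    by (subst sum_lessThan_if_less) simp_all
  also have "\<dots> = c*l + d*l"
    using staircase_row_sum[of "c*k" "d*l" "c*l" "d*k" i] True by (simp add: sum_Suc)
  finally show ?thesis by (simp add: algebra_simps)
next
  case False
  then have "(\<Sum>j<(2*c + d)*l. two_block k l c d i j) = (\<Sum>j<(2*c + d)*l. if j < c*l then 0 else 1)"
    unfolding two_block_def by (intro sum.cong) auto
  also have "\<dots> = (2*c + d)*l - c*l"
    by (subst sum_lessThan_if_less) simp_all
  finally show ?thesis by (simp add: algebra_simps diff_mult_distrib)
qed

lemma two_block_col_sum:
  "j < (2*c + d)*l \<Longrightarrow> (\<Sum>i<(2*c + d)*k. two_block k l c d i j) = (c + d)*k"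
  using two_block_row_sum[of j c d l k] by (simp add: two_block_swap)

lemma tropdet_two_block_ge:
  assumes "k \<le> l" "m = q * n + r" "n = 2*c + d" "r = c + d"
  obtains A where "A \<in> Dkl k l m n"
    and "int (n*k*q) + int r * (int k + int l) - int (n*l) \<le> int (tropdet (n*k) (n*l) A)"
proof -
  define A where "A i j = (if i < n*k \<and> j < n*l then q + two_block k l c d i j else 0)" for i j
  have member: "A \<in> Dkl k l m n"
    unfolding A_def using assms(2-4)
    by (intro add_constant_in_Dkl) (auto simp: two_block_row_sum two_block_col_sum)
  have bound: "n*k*(q + 1) \<le> tropdet (n*k) (n*l) A + c*k + c*l"
  proof -
    have "n*k \<le> n*l" using assms(1) by simp
    then have "n*k*(q + 1) - (c*k + c*l) \<le> tropdet (n*k) (n*l) A"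
    proof (rule tropdet_geI)
      fix \<sigma> assume \<sigma>: "\<sigma> \<in> transversals (n*k) (n*l)"
      define crossing where
        "crossing i \<longleftrightarrow> i < c*k \<and> c*l \<le> \<sigma> i \<or> c*k \<le> i \<and> \<sigma> i < c*l" for i
      have "q + 1 \<le> A i (\<sigma> i) + of_bool (crossing i)" if "i < n*k" for i
        using that transversal_less[OF \<sigma> that]
        unfolding A_def two_block_def crossing_def by auto
      then have "(\<Sum>i<n*k. q + 1) \<le> (\<Sum>i<n*k. A i (\<sigma> i) + of_bool (crossing i))"
        by (intro sum_mono) simp
      also have "\<dots> = (\<Sum>i<n*k. A i (\<sigma> i)) + card {i. i < n*k \<and> crossing i}"
        by (simp add: sum.distrib Int_def)
      finally have "(\<Sum>i<n*k. q + 1) \<le> (\<Sum>i<n*k. A i (\<sigma> i)) + card {i. i < n*k \<and> crossing i}" .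
      moreover have "card {i. i < n*k \<and> crossing i} \<le> c*k + c*l"
        using \<sigma> unfolding crossing_def transversals_def
        by (intro card_crossing_le) (simp add: lessThan_atLeast0)
      ultimately show "n*k*(q + 1) - (c*k + c*l) \<le> (\<Sum>i<n*k. A i (\<sigma> i))" by simp
    qed
    then show ?thesis by simp
  qed
  have "int (n*k*(q + 1)) - int (c*k + c*l) = int (n*k*q) + int r * (int k + int l) - int (n*l)"
    using assms(3,4) by (simp add: algebra_simps)
  with bound show ?thesis by (intro that[OF member]) linarith
qed

lemma Dkl_tropdet_attains:
  assumes "k \<le> l" "m = q * n + r" "r < n"
  obtains A where "A \<in> Dkl k l m n"
    and "max (int (n*k*q)) (int (n*k*q) + int r * (int k + int l) - int (n*l))
           \<le> int (tropdet (n*k) (n*l) A)"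
proof (cases "n*l < r*(k + l)")
  case True
  note True
  also have "r*(k + l) \<le> (2*r)*l" using assms(1) by (simp add: algebra_simps)
  finally have "n < 2*r" by (simp add: mult_less_cancel2)
  then have "n = 2*(n - r) + (2*r - n)" "r = (n - r) + (2*r - n)" using assms(3) by auto
  then obtain A where "A \<in> Dkl k l m n"
    and "int (n*k*q) + int r * (int k + int l) - int (n*l) \<le> int (tropdet (n*k) (n*l) A)"
    using tropdet_two_block_ge[OF assms(1,2)] by blast
  moreover have "int (n*l) < int r * (int k + int l)" using True by (metis of_nat_add of_nat_less_iff of_nat_mult)
  ultimately show ?thesis using that by simp
next
  case False
  obtain A where A: "A \<in> Dkl k l m n" "n*k*q \<le> tropdet (n*k) (n*l) A"
    using tropdet_staircase_ge[OF assms(1,2)] by blast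
  have "int r * (int k + int l) \<le> int (n*l)"
    using False by (metis not_less of_nat_add of_nat_le_iff of_nat_mult)
  then have "max (int (n*k*q)) (int (n*k*q) + int r * (int k + int l) - int (n*l)) = int (n*k*q)"
    by (simp add: max_def)
  with A show ?thesis by (intro that[OF A(1)]) (simp only: of_nat_le_iff)
qed

lemma Ukl_eqI:
  assumes "\<And>A. A \<in> Dkl k l m n \<Longrightarrow> int (tropdet (n*k) (n*l) A) \<le> B"
    and "A\<^sub>0 \<in> Dkl k l m n" "B \<le> int (tropdet (n*k) (n*l) A\<^sub>0)"
  shows "int (Ukl k l m n) = B"
proof -
  define T where "T = {tropdet (n*k) (n*l) A | A. A \<in> Dkl k l m n}"
  have attained: "tropdet (n*k) (n*l) A\<^sub>0 \<in> T" using assms(2) unfolding T_def by blast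
  have le: "t \<le> tropdet (n*k) (n*l) A\<^sub>0" if "t \<in> T" for t
    using that assms(1,3) unfolding T_def by force
  then have "T \<subseteq> {..tropdet (n*k) (n*l) A\<^sub>0}" by blast
  then have "finite T" by (rule finite_subset) simp
  then have "Max T = tropdet (n*k) (n*l) A\<^sub>0" using attained le by (intro Max_eqI)
  then show ?thesis unfolding Ukl_def T_def[symmetric] using assms(1)[OF assms(2)] assms(3) by simp
qed

theorem theorem5p3:
  fixes k l m n q r :: nat
  assumes "0 < k" and "k \<le> l" and "gcd k l = 1" and "1 \<le> n"
    and "m = q * n + r" and "r < n"
  shows "int (Ukl k l m n) =
           max (int (n*k*q)) (int (n*k*q) + int r * (int k + int l) - int (n*l))"
proof -
  obtain A where "A \<in> Dkl k l m n"
    and "max (int (n*k*q)) (int (n*k*q) + int r * (int k + int l) - int (n*l))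
           \<le> int (tropdet (n*k) (n*l) A)"
    using Dkl_tropdet_attains[OF assms(2,5,6)] .
  then show ?thesis using tropdet_Dkl_le[OF assms(1,2,4,5)] by (intro Ukl_eqI)
qed

end
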